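(* For every $T<+\infty$ and every $i\in\{1,\dots,l\}$ there exists $C<+\infty$ such that for all $h>0$ and $k\in\mathbb{N}$ with $kh\leq T$, and with $N=\lfloor T/h\rfloor$, $$M(\rho_{i,h}^k)\leq C,\qquad \mathcal{F}_i(\rho_{i,h}^k)\leq C,\qquad \sum_{k=0}^{N-1}W_2^2(\rho_{i,h}^k,\rho_{i,h}^{k+1})\leq Ch.$$
   Context: Setting: integers $n,l\geq1$; $\mathcal{P}_2^{ac}(\mathbb{R}^n)$ probability densities with finite second moment $M(\rho)=\int|x|^2\rho$; $W_2$ quadratic Wasserstein distance. For $i=1,\dots,l$: $m_i\geq1$, $F_i\in\mathcal{H}_{m_i}$ ($\mathcal{H}_1=\{x\log x\}$; for $m>1$ strictly convex superlinear $F$ with $F(0)=F'(0)=0$, $F''(x)\geq Cx^{m-2}$, $xF'(x)-F(x)\leq C(x+x^m)$); $V_i:\mathcal{P}(\mathbb{R}^n)^l\to\mathcal{C}^2(\mathbb{R}^n)$ continuous with $V_i\geq0$, $\|\nabla V_i[\boldsymbol{\rho}]\|_\infty+\|D^2V_i[\boldsymbol{\rho}]\|_\infty\leq C$, $\|\nabla V_i[\boldsymbol{\nu}]-\nabla V_i[\boldsymbol{\sigma}]\|_\infty\leq C\sum_jW_2(\nu_j,\sigma_j)$. $\mathcal{F}_i(\rho)=\int F_i(\rho)$ (if $\rho\ll\mathcal{L}^n$, else $+\infty$), $\mathcal{V}_i(\rho\mid\boldsymbol{\mu})=\int V_i[\boldsymbol{\mu}]\rho$. Initial data $\rho_{i,0}\in\mathcal{P}_2^{ac}(\mathbb{R}^n)$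 with $\mathcal{F}_i(\rho_{i,0})+\mathcal{V}_i(\rho_{i,0}\mid\boldsymbol{\rho}_0)<\infty$. Scheme: $\rho_{i,h}^0=\rho_{i,0}$; for $k\geq1$, $\rho_{i,h}^k$ is the unique minimizer over $\mathcal{P}_2^{ac}(\mathbb{R}^n)$ of $W_2^2(\rho,\rho_{i,h}^{k-1})+2h(\mathcal{F}_i(\rho)+\mathcal{V}_i(\rho\mid\boldsymbol{\rho}_h^{k-1}))$, with $\boldsymbol{\rho}_h^{k-1}=(\rho_{1,h}^{k-1},\dots,\rho_{l,h}^{k-1})$. *)

theory Defs
  imports "HOL-Probability.Probability"
begin

definition P2ac :: "('a::euclidean_space \<Rightarrow> real) set" where
  "P2ac = {\<rho>. \<rho> \<in> borel_measurable borel \<and> (\<forall>x. 0 \<le> \<rho> x)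
              \<and> (\<integral>\<^sup>+ x. ennreal (\<rho> x) \<partial>lborel) = 1
              \<and> (\<integral>\<^sup>+ x. ennreal ((norm x)\<^sup>2 * \<rho> x) \<partial>lborel) < \<infinity>}"

definition dmeas :: "('a::euclidean_space \<Rightarrow> real) \<Rightarrow> 'a measure" where
  "dmeas \<rho> = density lborel (\<lambda>x. ennreal (\<rho> x))"

definition moment2 :: "('a::euclidean_space \<Rightarrow> real) \<Rightarrow> ennreal" where
  "moment2 \<rho> = (\<integral>\<^sup>+ x. ennreal ((norm x)\<^sup>2 * \<rho> x) \<partial>lborel)"

definition couplings :: "'a::euclidean_space measure \<Rightarrow> 'a measure \<Rightarrow> ('a \<times> 'a) measure set" where
  "couplings \<mu> \<nu> = {\<pi>. sets \<pi> = sets (borel \<Otimes>\<^sub>M borel)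
                       \<and> distr \<pi> borel fst = \<mu> \<and> distr \<pi> borel snd = \<nu>}"

definition W2sq :: "'a::euclidean_space measure \<Rightarrow> 'a measure \<Rightarrow> ennreal" where
  "W2sq \<mu> \<nu> = (INF \<pi>\<in>couplings \<mu> \<nu>. \<integral>\<^sup>+ p. ennreal ((dist (fst p) (snd p))\<^sup>2) \<partial>\<pi>)"

(* quadratic Wasserstein distance (for measures with finite second moment) *)
definition W2 :: "'a::euclidean_space measure \<Rightarrow> 'a measure \<Rightarrow> real" where
  "W2 \<mu> \<nu> = sqrt (enn2real (W2sq \<mu> \<nu>))"

definition strictly_convex_on :: "real set \<Rightarrow> (real \<Rightarrow> real) \<Rightarrow> bool" where
  "strictly_convex_on S f \<longleftrightarrow> (\<forall>x\<in>S. \<forall>y\<in>S. \<forall>t::real. x \<noteq> y \<and> 0 < t \<and> t < 1 \<longrightarrow>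
      f ((1 - t) * x + t * y) < (1 - t) * f x + t * f y)"

definition Hclass :: "real \<Rightarrow> (real \<Rightarrow> real) \<Rightarrow> bool" where
  "Hclass m F \<longleftrightarrow>
     (if m = 1 then (\<forall>x\<ge>0. F x = x * ln x)
      else m > 1 \<and> strictly_convex_on {0..} F
        \<and> filterlim (\<lambda>x. F x / x) at_top at_top
        \<and> F 0 = 0 \<and> (F has_real_derivative 0) (at 0 within {0..})
        \<and> (\<exists>F' F'' C. C > 0
              \<and> (\<forall>x>0. (F has_real_derivative F' x) (at x))
              \<and> (\<forall>x>0. (F' has_real_derivative F'' x) (at x))
              \<and> (\<forall>x>0. F'' x \<ge> C * x powr (m - 2))
              \<and> (\<forall>x>0. x * F' x - F x \<le> C * (x + x powr m))))"

definition Ffun :: "(real \<Rightarrow> real) \<Rightarrow> ('a::euclidean_space \<Rightarrow> real) \<Rightarrow> ereal" where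
  "Ffun F \<rho> = (if integrable lborel (\<lambda>x. F (\<rho> x))
                then ereal (\<integral> x. F (\<rho> x) \<partial>lborel) else \<infinity>)"

definition Vfun :: "('a::euclidean_space \<Rightarrow> real) \<Rightarrow> ('a \<Rightarrow> real) \<Rightarrow> ennreal" where
  "Vfun Vmu \<rho> = (\<integral>\<^sup>+ x. ennreal (Vmu x * \<rho> x) \<partial>lborel)"

(* the JKO functional for component i with previous step rhoprev and frozen tuple mu *)
definition JKO :: "real \<Rightarrow> (real \<Rightarrow> real) \<Rightarrow> ('a::euclidean_space \<Rightarrow> real) \<Rightarrow> ('a \<Rightarrow> real)
                   \<Rightarrow> ('a \<Rightarrow> real) \<Rightarrow> ereal" where
  "JKO h F Vmu rhoprev \<rho> =
     enn2ereal (W2sq (dmeas \<rho>) (dmeas rhoprev)) + 2 * ereal h * (Ffun F \<rho> + enn2ereal (Vfun Vmu \<rho>))"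

end

theory Submission
  imports Defs
begin

text \<open>
Testing each JKO step against the previous iterate gives
\<open>W2\<^sup>2(\<rho>\<^sub>k, \<rho>\<^sub>k\<^sub>+\<^sub>1) / 4 + h F(\<rho>\<^sub>k\<^sub>+\<^sub>1) \<le> h F(\<rho>\<^sub>k) + h\<^sup>2 L\<^sup>2\<close>: along a transport plan the
potential changes by at most \<open>L\<close> times the displacement, \<open>L\<close> being the uniform gradient bound
of \<open>V\<close>, and Young's inequality absorbs this into half of the distance term. Summing controls
the distances and the entropy up to a lower bound on \<open>F\<close>; this is \<open>F \<ge> 0\<close> for \<open>m > 1\<close> and the
Carleman estimate \<open>F(\<rho>) \<ge> -\<delta> M(\<rho>) - C\<^sub>\<delta>\<close> for \<open>x log x\<close>. In turn the second moment grows per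
step by at most a factor \<open>1 + h\<close> plus \<open>(1 + 1/h) W2\<^sup>2\<close>, and a discrete Gronwall argument with
\<open>\<delta>\<close> small compared to \<open>e\<^sup>-\<^sup>T\<close> absorbs the moment term.
\<close>

lemma P2acD:
  assumes "\<rho> \<in> P2ac"
  shows "\<rho> \<in> borel_measurable borel" "\<And>x. 0 \<le> \<rho> x"
    "(\<integral>\<^sup>+ x. ennreal (\<rho> x) \<partial>lborel) = 1"
    "moment2 \<rho> < \<infinity>"
  using assms unfolding P2ac_def moment2_def by auto

lemma sets_dmeas [simp]: "sets (dmeas \<rho>) = sets borel"
  by (simp add: dmeas_def)

lemma nn_integral_dmeas:
  assumes "\<rho> \<in> P2ac" "g \<in> borel_measurable borel"
  shows "(\<integral>\<^sup>+ x. g x \<partial>dmeas \<rho>) = (\<integral>\<^sup>+ x. ennreal (\<rho> x) * g x \<partial>lborel)"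
  unfolding dmeas_def using assms P2acD[OF assms(1)]
  by (subst nn_integral_density) auto

lemma nn_integral_dmeas_real:
  fixes g :: "'a::euclidean_space \<Rightarrow> real"
  assumes "\<rho> \<in> P2ac" "g \<in> borel_measurable borel" "\<And>x. g x \<ge> 0"
  shows "(\<integral>\<^sup>+ x. ennreal (g x) \<partial>dmeas \<rho>) = (\<integral>\<^sup>+ x. ennreal (g x * \<rho> x) \<partial>lborel)"
  using assms P2acD[OF assms(1)]
  by (subst nn_integral_dmeas) (auto simp: ennreal_mult'' mult.commute intro!: nn_integral_cong)

lemma nn_integral_dmeas_const:
  assumes "\<rho> \<in> P2ac"
  shows "(\<integral>\<^sup>+ x. ennreal c \<partial>dmeas \<rho>) = ennreal c"
proof -
  have "(\<integral>\<^sup>+ x. ennreal c \<partial>dmeas \<rho>) = (\<integral>\<^sup>+ x. ennreal c * ennreal (\<rho> x) \<partial>lborel)"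
    using assms by (subst nn_integral_dmeas) (auto simp: mult.commute)
  also have "\<dots> = ennreal c * (\<integral>\<^sup>+ x. ennreal (\<rho> x) \<partial>lborel)"
    using P2acD[OF assms] by (subst nn_integral_cmult) auto
  finally show ?thesis using P2acD[OF assms] by simp
qed

lemma moment2_integrable:
  assumes "\<rho> \<in> P2ac"
  shows "integrable lborel (\<lambda>x. (norm x)\<^sup>2 * \<rho> x)"
    "(\<integral> x. (norm x)\<^sup>2 * \<rho> x \<partial>lborel) = enn2real (moment2 \<rho>)"
proof -
  have m: "(\<lambda>x. (norm x)\<^sup>2 * \<rho> x) \<in> borel_measurable borel"
    using P2acD(1)[OF assms] by measurable
  show "integrable lborel (\<lambda>x. (norm x)\<^sup>2 * \<rho> x)"
    using P2acD[OF assms] m by (intro integrableI_nonneg) (auto simp: moment2_def)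
  show "(\<integral> x. (norm x)\<^sup>2 * \<rho> x \<partial>lborel) = enn2real (moment2 \<rho>)"
    using P2acD[OF assms] m by (subst integral_eq_nn_integral) (auto simp: moment2_def)
qed

lemma couplingsD:
  assumes "\<pi> \<in> couplings \<mu> \<nu>"
  shows "sets \<pi> = sets (borel \<Otimes>\<^sub>M borel)" "distr \<pi> borel fst = \<mu>" "distr \<pi> borel snd = \<nu>"
  using assms by (auto simp: couplings_def)

lemma couplings_measurable:
  assumes "\<pi> \<in> couplings \<mu> (\<nu>::'a::euclidean_space measure)"
  shows "fst \<in> measurable \<pi> (borel::'a measure)" "snd \<in> measurable \<pi> (borel::'a measure)"
  using measurable_cong_sets[OF couplingsD(1)[OF assms] refl] by auto

lemma nn_integral_coupling_fst:
  fixes g :: "'a::euclidean_space \<Rightarrow> ennreal"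
  assumes "\<pi> \<in> couplings \<mu> \<nu>" "g \<in> borel_measurable borel"
  shows "(\<integral>\<^sup>+ p. g (fst p) \<partial>\<pi>) = (\<integral>\<^sup>+ x. g x \<partial>\<mu>)"
proof -
  have "g \<in> borel_measurable (distr \<pi> borel fst)"
    using assms(2) measurable_cong_sets[OF sets_distr refl] by blast
  then show ?thesis
    using nn_integral_distr[OF couplings_measurable(1)[OF assms(1)]] couplingsD(2)[OF assms(1)]
    by simp
qed

lemma nn_integral_coupling_snd:
  fixes g :: "'a::euclidean_space \<Rightarrow> ennreal"
  assumes "\<pi> \<in> couplings \<mu> \<nu>" "g \<in> borel_measurable borel"
  shows "(\<integral>\<^sup>+ p. g (snd p) \<partial>\<pi>) = (\<integral>\<^sup>+ x. g x \<partial>\<nu>)"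
proof -
  have "g \<in> borel_measurable (distr \<pi> borel snd)"
    using assms(2) measurable_cong_sets[OF sets_distr refl] by blast
  then show ?thesis
    using nn_integral_distr[OF couplings_measurable(2)[OF assms(1)]] couplingsD(3)[OF assms(1)]
    by simp
qed

lemma borel_measurable_dist_sq:
  "(\<lambda>p::'a::euclidean_space \<times> 'a. ennreal ((dist (fst p) (snd p))\<^sup>2)) \<in> borel_measurable (borel \<Otimes>\<^sub>M borel)"
  by measurable

lemma W2sq_self: "W2sq (dmeas \<rho>) (dmeas (\<rho>::'a::euclidean_space \<Rightarrow> real)) = 0"
proof -
  let ?diag = "\<lambda>x::'a. (x, x)"
  let ?\<pi> = "distr (dmeas \<rho>) (borel \<Otimes>\<^sub>M borel) ?diag"
  have diag: "?diag \<in> measurable (dmeas \<rho>) (borel \<Otimes>\<^sub>M borel)"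
    by (subst measurable_cong_sets[OF sets_dmeas refl]) measurable
  have "distr ?\<pi> borel fst = dmeas \<rho>" "distr ?\<pi> borel snd = dmeas \<rho>"
    by (simp_all add: distr_distr[OF _ diag] comp_def distr_id2)
  then have coupling: "?\<pi> \<in> couplings (dmeas \<rho>) (dmeas \<rho>)"
    unfolding couplings_def by simp
  have "(\<integral>\<^sup>+ p. ennreal ((dist (fst p) (snd p))\<^sup>2) \<partial>?\<pi>)
      = (\<integral>\<^sup>+ x. ennreal ((dist (fst (?diag x)) (snd (?diag x)))\<^sup>2) \<partial>dmeas \<rho>)"
    by (rule nn_integral_distr[OF diag])
       (subst measurable_cong_sets[OF sets_distr refl], rule borel_measurable_dist_sq)
  then have "(\<integral>\<^sup>+ p. ennreal ((dist (fst p) (snd p))\<^sup>2) \<partial>?\<pi>) = 0" by simp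
  then show ?thesis
    using INF_lower[OF coupling, of "\<lambda>\<pi>. \<integral>\<^sup>+ p. ennreal ((dist (fst p) (snd p))\<^sup>2) \<partial>\<pi>"]
    unfolding W2sq_def by simp
qed

lemma W2sq_commute_le: "W2sq \<nu> \<mu> \<le> W2sq \<mu> (\<nu>::'a::euclidean_space measure)"
  unfolding W2sq_def
proof (rule INF_greatest)
  fix \<pi> assume \<pi>: "\<pi> \<in> couplings \<mu> \<nu>"
  let ?swap = "\<lambda>p::'a \<times> 'a. (snd p, fst p)"
  let ?\<sigma> = "distr \<pi> (borel \<Otimes>\<^sub>M borel) ?swap"
  have swap: "?swap \<in> measurable \<pi> (borel \<Otimes>\<^sub>M borel)"
    by (intro measurable_Pair couplings_measurable[OF \<pi>])
  have "distr ?\<sigma> borel fst = \<nu>" "distr ?\<sigma> borel snd = \<mu>"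
    using couplingsD[OF \<pi>] by (simp_all add: distr_distr[OF _ swap] comp_def)
  then have coupling: "?\<sigma> \<in> couplings \<nu> \<mu>"
    unfolding couplings_def by simp
  have "(\<integral>\<^sup>+ p. ennreal ((dist (fst p) (snd p))\<^sup>2) \<partial>?\<sigma>)
      = (\<integral>\<^sup>+ p. ennreal ((dist (fst (?swap p)) (snd (?swap p)))\<^sup>2) \<partial>\<pi>)"
    by (rule nn_integral_distr[OF swap])
       (subst measurable_cong_sets[OF sets_distr refl], rule borel_measurable_dist_sq)
  then show "(INF \<pi>\<in>couplings \<nu> \<mu>. \<integral>\<^sup>+ p. ennreal ((dist (fst p) (snd p))\<^sup>2) \<partial>\<pi>)
      \<le> (\<integral>\<^sup>+ p. ennreal ((dist (fst p) (snd p))\<^sup>2) \<partial>\<pi>)"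
    using INF_lower[OF coupling, of "\<lambda>\<pi>. \<integral>\<^sup>+ p. ennreal ((dist (fst p) (snd p))\<^sup>2) \<partial>\<pi>"]
    by (simp add: dist_commute)
qed

lemma W2sq_commute: "W2sq \<nu> \<mu> = W2sq \<mu> (\<nu>::'a::euclidean_space measure)"
  by (simp add: W2sq_commute_le antisym)

lemma ennreal_le_add_mult_INF:
  fixes x a :: ennreal and f :: "'b \<Rightarrow> ennreal"
  assumes b: "b > 0" and le: "\<And>\<pi>. \<pi> \<in> A \<Longrightarrow> x \<le> a + ennreal b * f \<pi>"
  shows "x \<le> a + ennreal b * (INF \<pi>\<in>A. f \<pi>)"
proof (cases "(INF \<pi>\<in>A. f \<pi>) = \<top>")
  case True
  then show ?thesis using b by (simp add: ennreal_mult_top)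
next
  case False
  show ?thesis
  proof (rule ennreal_le_epsilon)
    fix e :: real assume e: "0 < e"
    then obtain \<pi> where \<pi>: "\<pi> \<in> A" "f \<pi> < (INF \<pi>\<in>A. f \<pi>) + ennreal (e / b)"
      using INF_approx_ennreal[of "e / b" "INF \<pi>\<in>A. f \<pi>" f A] False b by auto
    have "x \<le> a + ennreal b * f \<pi>" using le \<pi> by auto
    also have "\<dots> \<le> a + ennreal b * ((INF \<pi>\<in>A. f \<pi>) + ennreal (e / b))"
      using \<pi> by (intro add_left_mono mult_left_mono) auto
    also have "\<dots> = a + ennreal b * (INF \<pi>\<in>A. f \<pi>) + ennreal e"
      using b e by (simp add: distrib_left add.assoc ennreal_mult[symmetric])
    finally show "x \<le> a + ennreal b * (INF \<pi>\<in>A. f \<pi>) + ennreal e" .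
  qed
qed

text \<open>Integrate the pointwise bound along (almost) optimal plans.\<close>

lemma nn_integral_le_W2sq:
  fixes g G :: "'a::euclidean_space \<Rightarrow> real"
  assumes \<rho>: "\<rho> \<in> P2ac" and \<sigma>: "\<sigma> \<in> P2ac"
    and g: "g \<in> borel_measurable borel" and G: "G \<in> borel_measurable borel"
    and g_nonneg: "\<And>x. g x \<ge> 0" and G_nonneg: "\<And>x. G x \<ge> 0" and b: "b > 0" and c: "c \<ge> 0"
    and le: "\<And>x y. G y \<le> g x + b * (dist x y)\<^sup>2 + c"
  shows "(\<integral>\<^sup>+ x. ennreal (G x * \<sigma> x) \<partial>lborel)
     \<le> ((\<integral>\<^sup>+ x. ennreal (g x * \<rho> x) \<partial>lborel) + ennreal c) + ennreal b * W2sq (dmeas \<rho>) (dmeas \<sigma>)"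
  unfolding W2sq_def
proof (rule ennreal_le_add_mult_INF[OF b])
  fix \<pi> assume \<pi>: "\<pi> \<in> couplings (dmeas \<rho>) (dmeas \<sigma>)"
  note meas = couplings_measurable[OF \<pi>]
  have "(\<integral>\<^sup>+ x. ennreal (G x * \<sigma> x) \<partial>lborel) = (\<integral>\<^sup>+ p. ennreal (G (snd p)) \<partial>\<pi>)"
    using nn_integral_dmeas_real[OF \<sigma> G G_nonneg] nn_integral_coupling_snd[OF \<pi>, of "\<lambda>x. ennreal (G x)"] G
    by simp
  also have "\<dots> \<le> (\<integral>\<^sup>+ p. ennreal (g (fst p)) + ennreal b * ennreal ((dist (fst p) (snd p))\<^sup>2)
                       + ennreal c \<partial>\<pi>)"
  proof (rule nn_integral_mono)
    fix p :: "'a \<times> 'a"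
    have "ennreal (G (snd p)) \<le> ennreal (g (fst p) + b * (dist (fst p) (snd p))\<^sup>2 + c)"
      using le by (intro ennreal_leI) auto
    also have "\<dots> = ennreal (g (fst p)) + ennreal b * ennreal ((dist (fst p) (snd p))\<^sup>2) + ennreal c"
      using g_nonneg b c by (simp add: ennreal_plus[symmetric] ennreal_mult[symmetric] del: ennreal_plus)
    finally show "ennreal (G (snd p))
        \<le> ennreal (g (fst p)) + ennreal b * ennreal ((dist (fst p) (snd p))\<^sup>2) + ennreal c" .
  qed
  also have "\<dots> = (\<integral>\<^sup>+ p. ennreal (g (fst p)) \<partial>\<pi>)
      + ennreal b * (\<integral>\<^sup>+ p. ennreal ((dist (fst p) (snd p))\<^sup>2) \<partial>\<pi>) + (\<integral>\<^sup>+ p. ennreal c \<partial>\<pi>)"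
    using meas g by (simp add: nn_integral_add nn_integral_cmult)
  also have "(\<integral>\<^sup>+ p. ennreal (g (fst p)) \<partial>\<pi>) = (\<integral>\<^sup>+ x. ennreal (g x * \<rho> x) \<partial>lborel)"
    using nn_integral_coupling_fst[OF \<pi>, of "\<lambda>x. ennreal (g x)"] g nn_integral_dmeas_real[OF \<rho> g g_nonneg]
    by simp
  also have "(\<integral>\<^sup>+ p. ennreal c \<partial>\<pi>) = ennreal c"
    using nn_integral_coupling_fst[OF \<pi>, of "\<lambda>x. ennreal c"] nn_integral_dmeas_const[OF \<rho>] by simp
  finally show "(\<integral>\<^sup>+ x. ennreal (G x * \<sigma> x) \<partial>lborel) \<le> ((\<integral>\<^sup>+ x. ennreal (g x * \<rho> x) \<partial>lborel) + ennreal c)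
      + ennreal b * (\<integral>\<^sup>+ p. ennreal ((dist (fst p) (snd p))\<^sup>2) \<partial>\<pi>)"
    by (simp add: ac_simps)
qed

lemma nn_integral_gaussian_real_finite:
  assumes d: "(d::real) > 0"
  shows "(\<integral>\<^sup>+ t. ennreal (exp (- d * t\<^sup>2)) \<partial>lborel) < \<infinity>"
proof -
  define s where "s = sqrt (1 / (2 * d))"
  have s: "s > 0" "2 * s\<^sup>2 = 1 / d" using d by (simp_all add: s_def)
  define K where "K = sqrt (2 * pi * s\<^sup>2)"
  have "exp (- d * t\<^sup>2) = K * normal_density 0 s t" for t
  proof -
    have "- (t - 0)\<^sup>2 / (2 * s\<^sup>2) = - d * t\<^sup>2" using d by (simp only: s(2)) simp
    then show ?thesis using s unfolding normal_density_def K_def by simp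
  qed
  moreover have "integrable lborel (\<lambda>t. K * normal_density 0 s t)"
    using s by (auto intro!: integrable_mult_right integrable_normal_density)
  ultimately have "integrable lborel (\<lambda>t. exp (- d * t\<^sup>2))" by simp
  then show ?thesis using integrableD(2) by (auto simp: less_top)
qed

lemma nn_integral_gaussian_finite:
  assumes d: "(d::real) > 0"
  shows "(\<integral>\<^sup>+ x. ennreal (exp (- d * (norm (x::'a::euclidean_space))\<^sup>2)) \<partial>lborel) < \<infinity>"
proof -
  have product: "ennreal (exp (- d * (norm x)\<^sup>2)) = (\<Prod>b\<in>Basis. ennreal (exp (- d * (x \<bullet> b)\<^sup>2)))"
    for x :: 'a
  proof -
    have "(norm x)\<^sup>2 = (\<Sum>b\<in>Basis. (x \<bullet> b)\<^sup>2)"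
      unfolding power2_norm_eq_inner by (subst euclidean_inner) (simp add: power2_eq_square)
    then show ?thesis
      by (simp add: sum_distrib_left exp_sum[symmetric] sum_negf prod_ennreal)
  qed
  have "(\<integral>\<^sup>+ x. ennreal (exp (- d * (norm (x::'a))\<^sup>2)) \<partial>lborel)
      = (\<Prod>b\<in>(Basis::'a set). (\<integral>\<^sup>+ t. ennreal (exp (- d * t\<^sup>2)) \<partial>lborel))"
    unfolding product by (rule nn_integral_lborel_prod) auto
  also have "\<dots> < \<infinity>"
    using nn_integral_gaussian_real_finite[OF d] by (simp add: power_less_top_ennreal)
  finally show ?thesis .
qed

lemma xlnx_ge_linear:
  fixes t a :: real assumes t: "t \<ge> 0"
  shows "t * ln t \<ge> - a * t - exp (- a)"
proof (cases "t = 0")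
  case False
  then have t: "t > 0" using t by simp
  have "-a - 1 - ln t = ln (exp (-a - 1) / t)"
    using t by (simp add: ln_div)
  also have "\<dots> \<le> exp (-a - 1) / t - 1"
    using t by (intro ln_le_minus_one) simp
  finally have "t * (-a - 1 - ln t) \<le> t * (exp (-a - 1) / t - 1)"
    using t by (intro mult_left_mono) auto
  then have "- a * t - t * ln t \<le> exp (-a - 1)"
    using t by (simp add: algebra_simps)
  moreover have "exp (-a - 1) \<le> exp (-a)" by simp
  ultimately show ?thesis by linarith
qed simp

text \<open>A strictly convex \<open>F\<close> with \<open>F(0) = F'(0) = 0\<close> cannot be negative: otherwise the chord from
  \<open>0\<close> to \<open>x\<close> would have negative slope, contradicting \<open>F'(0) = 0\<close> near \<open>0\<close>.\<close>

lemma Hclass_nonneg: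
  assumes H: "Hclass m F" and m: "m \<noteq> 1" and x: "x \<ge> 0"
  shows "F x \<ge> 0"
proof (rule ccontr)
  assume neg: "\<not> F x \<ge> 0"
  have convex: "strictly_convex_on {0..} F" and F0: "F 0 = 0"
    and F'0: "(F has_real_derivative 0) (at 0 within {0..})"
    using H m unfolding Hclass_def by auto
  have x: "x > 0" using neg x F0 by (cases "x = 0") auto
  define q where "q = F x / x"
  have "((\<lambda>y. (F y - F 0) / (y - 0)) \<longlongrightarrow> 0) (at 0 within {0..})"
    using F'0 by (simp add: has_field_derivative_iff)
  moreover have "q < 0" using neg x by (simp add: q_def divide_neg_pos)
  ultimately have "eventually (\<lambda>y. q < (F y - F 0) / (y - 0)) (at 0 within {0..})"
    by (rule order_tendstoD(1))
  then obtain d where d: "d > 0"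
    and slope: "\<And>y. y \<in> {0..} \<Longrightarrow> 0 < dist y 0 \<Longrightarrow> dist y 0 < d \<Longrightarrow> q < (F y - F 0) / (y - 0)"
    unfolding eventually_at by auto
  define t where "t = min (1/2) (d / (2 * x))"
  have t: "0 < t" "t < 1" "t * x < d"
    using d x by (auto simp: t_def min_def field_simps)
  have "F ((1 - t) * 0 + t * x) < (1 - t) * F 0 + t * F x"
    using convex x t unfolding strictly_convex_on_def by (metis atLeast_iff less_eq_real_def less_irrefl)
  then have "F (t * x) < t * F x" using F0 by simp
  moreover have "q < F (t * x) / (t * x)"
    using slope[of "t * x"] t x F0 by auto
  then have "t * F x < F (t * x)"
    using t x by (simp add: q_def pos_less_divide_eq mult.commute)
  ultimately show False by simp
qed

lemma Ffun_not_MInfty: "Ffun F \<rho> \<noteq> -\<infinity>"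
  unfolding Ffun_def by auto

text \<open>For \<open>m = 1\<close> this is the Carleman estimate; it follows from
  \<open>t log t \<ge> -a t - e\<^sup>-\<^sup>a\<close> with \<open>a = d |x|\<^sup>2\<close>.\<close>

lemma Ffun_ge_moment2:
  fixes \<rho> :: "'a::euclidean_space \<Rightarrow> real"
  assumes H: "Hclass m F" and \<rho>: "\<rho> \<in> P2ac" and d: "d > 0" and f: "Ffun F \<rho> = ereal f"
  shows "f \<ge> - d * enn2real (moment2 \<rho>)
              - enn2real (\<integral>\<^sup>+ x. ennreal (exp (- d * (norm (x::'a))\<^sup>2)) \<partial>lborel)"
    (is "f \<ge> _ - ?G")
proof -
  have integrable: "integrable lborel (\<lambda>x. F (\<rho> x))" and f: "f = (\<integral> x. F (\<rho> x) \<partial>lborel)"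
    using f unfolding Ffun_def by (auto split: if_splits)
  have gauss: "integrable lborel (\<lambda>x::'a. exp (- d * (norm x)\<^sup>2))"
    "(\<integral> x. exp (- d * (norm (x::'a))\<^sup>2) \<partial>lborel) = ?G"
    using nn_integral_gaussian_finite[OF d, where 'a='a]
    by (auto intro!: integrableI_nonneg simp: integral_eq_nn_integral)
  show ?thesis
  proof (cases "m = 1")
    case True
    then have xlnx: "\<And>y. y \<ge> 0 \<Longrightarrow> F y = y * ln y" using H unfolding Hclass_def by auto
    have "- d * enn2real (moment2 \<rho>) - ?G
        = (\<integral> x. - d * ((norm x)\<^sup>2 * \<rho> x) - exp (- d * (norm x)\<^sup>2) \<partial>lborel)"
      using moment2_integrable[OF \<rho>] gauss by simp
    also have "\<dots> \<le> (\<integral> x. F (\<rho> x) \<partial>lborel)"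
    proof (rule integral_mono)
      show "integrable lborel (\<lambda>x. - d * ((norm x)\<^sup>2 * \<rho> x) - exp (- d * (norm x)\<^sup>2))"
        using moment2_integrable(1)[OF \<rho>] gauss(1) by auto
      fix x :: 'a
      have "- (d * (norm x)\<^sup>2) * \<rho> x - exp (- (d * (norm x)\<^sup>2)) \<le> \<rho> x * ln (\<rho> x)"
        using P2acD(2)[OF \<rho>] by (rule xlnx_ge_linear)
      then show "- d * ((norm x)\<^sup>2 * \<rho> x) - exp (- d * (norm x)\<^sup>2) \<le> F (\<rho> x)"
        using xlnx[OF P2acD(2)[OF \<rho>]] by (simp add: algebra_simps)
    qed (rule integrable)
    finally show ?thesis using f by simp
  next
    case False
    have "0 \<le> (\<integral> x. F (\<rho> x) \<partial>lborel)"
      using Hclass_nonneg[OF H False P2acD(2)[OF \<rho>]] by (intro integral_nonneg_AE) auto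
    moreover have "0 \<le> d * enn2real (moment2 \<rho>)" "0 \<le> ?G" using d by simp_all
    ultimately show ?thesis using f by linarith
  qed
qed

lemma lipschitz_from_gradient_bound:
  fixes f :: "'a::euclidean_space \<Rightarrow> real"
  assumes D: "\<And>x. (f has_derivative (\<lambda>v. g x \<bullet> v)) (at x)" and bound: "\<And>x. norm (g x) \<le> L"
  shows "\<bar>f x - f y\<bar> \<le> L * dist x y"
proof -
  have "norm (f x - f y) \<le> L * norm (x - y)"
  proof (rule differentiable_bound[of UNIV])
    fix z :: 'a
    show "(f has_derivative (\<lambda>v. g z \<bullet> v)) (at z within UNIV)" using D by simp
    have "onorm (\<lambda>v. g z \<bullet> v) \<le> norm (g z) * onorm (\<lambda>v::'a. v)"
      by (rule onorm_inner_right) simp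
    then show "onorm (\<lambda>v. g z \<bullet> v) \<le> L" using bound[of z] by (simp add: onorm_id)
  qed auto
  then show ?thesis by (simp add: dist_norm)
qed

lemma borel_measurable_has_derivative:
  assumes "\<And>x. (f has_derivative f' x) (at x)"
  shows "f \<in> borel_measurable borel"
  by (rule borel_measurable_continuous_onI, rule has_derivative_continuous_on) (use assms in simp)

lemma Vfun_finite:
  fixes V :: "'a::euclidean_space \<Rightarrow> real"
  assumes \<rho>: "\<rho> \<in> P2ac" and L: "L \<ge> 0" and V_nonneg: "\<And>x. V x \<ge> 0"
    and V_lip: "\<And>x y. \<bar>V x - V y\<bar> \<le> L * dist x y"
  shows "Vfun V \<rho> \<noteq> \<top>"
proof -
  note \<rho>_meas = P2acD(1)[OF \<rho>] and \<rho>_nonneg = P2acD(2)[OF \<rho>]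
  have "Vfun V \<rho> \<le> (\<integral>\<^sup>+ x. ennreal ((V 0 + L) * \<rho> x) + ennreal L * ennreal ((norm x)\<^sup>2 * \<rho> x) \<partial>lborel)"
    unfolding Vfun_def
  proof (rule nn_integral_mono)
    fix x :: 'a
    have "norm x \<le> 1 + (norm x)\<^sup>2"
      using zero_le_power2[of "norm x - 1"] norm_ge_zero[of x] unfolding power2_diff power_one by linarith
    then have "L * norm x \<le> L * (1 + (norm x)\<^sup>2)"
      using L by (rule mult_left_mono)
    then have "V x \<le> V 0 + L * (1 + (norm x)\<^sup>2)"
      using V_lip[of x 0] by (simp add: dist_norm)
    then have "V x * \<rho> x \<le> (V 0 + L) * \<rho> x + L * ((norm x)\<^sup>2 * \<rho> x)"
      using mult_right_mono[OF _ \<rho>_nonneg[of x]] by (fastforce simp: algebra_simps)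
    then show "ennreal (V x * \<rho> x) \<le> ennreal ((V 0 + L) * \<rho> x) + ennreal L * ennreal ((norm x)\<^sup>2 * \<rho> x)"
      using L \<rho>_nonneg[of x] V_nonneg[of 0]
      by (simp add: ennreal_plus[symmetric] ennreal_mult[symmetric] ennreal_leI del: ennreal_plus)
  qed
  also have "\<dots> = ennreal (V 0 + L) + ennreal L * moment2 \<rho>"
    using \<rho>_meas \<rho>_nonneg V_nonneg[of 0] L P2acD(3)[OF \<rho>] unfolding moment2_def
    by (subst nn_integral_add) (auto simp: nn_integral_cmult ennreal_mult)
  also have "\<dots> < \<top>"
    using P2acD(4)[OF \<rho>] by (simp add: ennreal_mult_less_top less_top)
  finally show ?thesis by simp
qed

lemma mult_le_sq_div_plus_sq:
  fixes d L h :: real assumes "h > 0"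
  shows "L * d \<le> d\<^sup>2 / (4 * h) + h * L\<^sup>2"
proof -
  have "0 \<le> (d - 2 * h * L)\<^sup>2 / (4 * h)" using assms by simp
  also have "\<dots> = d\<^sup>2 / (4 * h) - L * d + h * L\<^sup>2"
    using assms by (simp add: power2_eq_square field_simps)
  finally show ?thesis by simp
qed

lemma Vfun_le_W2sq:
  fixes V :: "'a::euclidean_space \<Rightarrow> real"
  assumes \<rho>: "\<rho> \<in> P2ac" and \<sigma>: "\<sigma> \<in> P2ac" and h: "h > 0"
    and V_nonneg: "\<And>x. V x \<ge> 0" and V_meas: "V \<in> borel_measurable borel"
    and V_lip: "\<And>x y. \<bar>V x - V y\<bar> \<le> L * dist x y"
  shows "Vfun V \<sigma> \<le> Vfun V \<rho> + ennreal (h * L\<^sup>2) + ennreal (1 / (4 * h)) * W2sq (dmeas \<rho>) (dmeas \<sigma>)"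
  unfolding Vfun_def
proof (rule nn_integral_le_W2sq[OF \<rho> \<sigma> V_meas V_meas V_nonneg V_nonneg])
  fix x y :: 'a
  have "V y - V x \<le> L * dist x y" using V_lip[of y x] by (simp add: dist_commute)
  also have "\<dots> \<le> (dist x y)\<^sup>2 / (4 * h) + h * L\<^sup>2" by (rule mult_le_sq_div_plus_sq[OF h])
  finally show "V y \<le> V x + 1 / (4 * h) * (dist x y)\<^sup>2 + h * L\<^sup>2" by simp
qed (use h in auto)

lemma norm_sq_le_shift:
  fixes x y :: "'a::real_normed_vector" and h :: real assumes h: "h > 0"
  shows "(norm y)\<^sup>2 \<le> (1 + h) * (norm x)\<^sup>2 + (1 + 1 / h) * (dist x y)\<^sup>2"
proof -
  let ?a = "norm x" and ?d = "dist x y"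
  have "norm y \<le> ?a + ?d"
    using norm_triangle_ineq[of x "y - x"] by (simp add: dist_norm norm_minus_commute)
  then have "(norm y)\<^sup>2 \<le> ?a\<^sup>2 + 2 * ?a * ?d + ?d\<^sup>2"
    using power_mono[of "norm y" "?a + ?d" 2] by (simp add: power2_eq_square algebra_simps)
  moreover have "0 \<le> (h * ?a - ?d)\<^sup>2 / h" using h by simp
  then have "2 * ?a * ?d \<le> h * ?a\<^sup>2 + ?d\<^sup>2 / h"
    using h by (simp add: power2_eq_square field_simps)
  ultimately show ?thesis by (simp add: algebra_simps)
qed

lemma moment2_le_W2sq:
  fixes \<rho> \<sigma> :: "'a::euclidean_space \<Rightarrow> real"
  assumes \<rho>: "\<rho> \<in> P2ac" and \<sigma>: "\<sigma> \<in> P2ac" and h: "h > 0"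
  shows "moment2 \<sigma> \<le> ennreal (1 + h) * moment2 \<rho> + ennreal (1 + 1 / h) * W2sq (dmeas \<rho>) (dmeas \<sigma>)"
proof -
  have "moment2 \<sigma> \<le> ((\<integral>\<^sup>+ x. ennreal ((1 + h) * (norm x)\<^sup>2 * \<rho> x) \<partial>lborel) + ennreal 0)
      + ennreal (1 + 1 / h) * W2sq (dmeas \<rho>) (dmeas \<sigma>)"
    unfolding moment2_def
    by (rule nn_integral_le_W2sq[OF \<rho> \<sigma>]) (use h norm_sq_le_shift[OF h] in \<open>auto intro: add_pos_pos\<close>)
  also have "(\<integral>\<^sup>+ x. ennreal ((1 + h) * (norm x)\<^sup>2 * \<rho> x) \<partial>lborel) = ennreal (1 + h) * moment2 \<rho>"
    unfolding moment2_def using h P2acD(1,2)[OF \<rho>]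
    by (subst nn_integral_cmult[symmetric])
       (auto simp: ennreal_mult[symmetric] mult.assoc simp del: ennreal_plus intro!: nn_integral_cong)
  finally show ?thesis by simp
qed

lemma ereal_add_mult_le_finite:
  fixes A B :: ennreal and X :: ereal
  assumes h: "h > 0" and X: "X \<noteq> -\<infinity>"
    and le: "enn2ereal A + 2 * ereal h * (X + enn2ereal B) \<le> ereal r"
  shows "X \<noteq> \<infinity>" "A \<noteq> \<top>" "B \<noteq> \<top>"
    "enn2real A + 2 * h * (real_of_ereal X + enn2real B) \<le> r"
proof -
  have finite: "X \<noteq> \<infinity> \<and> A \<noteq> \<top> \<and> B \<noteq> \<top>"
  proof (rule ccontr)
    assume "\<not> ?thesis"
    then have infinite: "enn2ereal A + 2 * ereal h * (X + enn2ereal B) = \<infinity>"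
      using X h by (cases X; cases A rule: ennreal_cases; cases B rule: ennreal_cases)
                   (auto simp: enn2ereal_ennreal)
    from le show False unfolding infinite by simp
  qed
  then show "X \<noteq> \<infinity>" "A \<noteq> \<top>" "B \<noteq> \<top>" by simp_all
  show "enn2real A + 2 * h * (real_of_ereal X + enn2real B) \<le> r"
    using le finite X
    by (cases X; cases A rule: ennreal_cases; cases B rule: ennreal_cases) (auto simp: enn2ereal_ennreal)
qed

lemma JKO_step:
  fixes \<rho> \<sigma> V :: "'a::euclidean_space \<Rightarrow> real"
  assumes \<rho>: "\<rho> \<in> P2ac" and \<sigma>: "\<sigma> \<in> P2ac" and h: "h > 0" and L: "L \<ge> 0"
    and V_nonneg: "\<And>x. V x \<ge> 0" and V_meas: "V \<in> borel_measurable borel"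
    and V_lip: "\<And>x y. \<bar>V x - V y\<bar> \<le> L * dist x y"
    and F_finite: "Ffun F \<rho> \<noteq> \<infinity>"
    and minimal: "JKO h F V \<rho> \<sigma> \<le> JKO h F V \<rho> \<rho>"
  shows "Ffun F \<sigma> \<noteq> \<infinity>" "W2sq (dmeas \<rho>) (dmeas \<sigma>) \<noteq> \<top>"
    "enn2real (W2sq (dmeas \<rho>) (dmeas \<sigma>)) / 4 + h * real_of_ereal (Ffun F \<sigma>)
       \<le> h * real_of_ereal (Ffun F \<rho>) + h\<^sup>2 * L\<^sup>2"
    "enn2real (moment2 \<sigma>) \<le> (1 + h) * enn2real (moment2 \<rho>) + (1 + 1 / h) * enn2real (W2sq (dmeas \<rho>) (dmeas \<sigma>))"
proof -
  let ?W = "W2sq (dmeas \<rho>) (dmeas \<sigma>)"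
  define f\<rho> u where "f\<rho> = real_of_ereal (Ffun F \<rho>)" and "u = enn2real (Vfun V \<rho>)"
  have V\<rho>: "Vfun V \<rho> = ennreal u"
    using Vfun_finite[OF \<rho> L V_nonneg V_lip] by (simp add: u_def less_top)
  have "JKO h F V \<rho> \<rho> = ereal (2 * h * (f\<rho> + u))"
    using F_finite Ffun_not_MInfty[of F \<rho>] unfolding JKO_def W2sq_self f\<rho>_def V\<rho>
    by (cases "Ffun F \<rho>") (auto simp: enn2ereal_ennreal zero_ennreal.rep_eq u_def)
  with minimal have "enn2ereal ?W + 2 * ereal h * (Ffun F \<sigma> + enn2ereal (Vfun V \<sigma>))
      \<le> ereal (2 * h * (f\<rho> + u))"
    unfolding JKO_def by (simp add: W2sq_commute)
  note step = ereal_add_mult_le_finite[OF h Ffun_not_MInfty this]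
  show "Ffun F \<sigma> \<noteq> \<infinity>" "?W \<noteq> \<top>" using step(1,2) .
  define w v where "w = enn2real ?W" and "v = enn2real (Vfun V \<sigma>)"
  have "Vfun V \<rho> \<le> Vfun V \<sigma> + ennreal (h * L\<^sup>2) + ennreal (1 / (4 * h)) * ?W"
    using Vfun_le_W2sq[OF \<sigma> \<rho> h V_nonneg V_meas V_lip] by (simp add: W2sq_commute)
  then have "u \<le> v + h * L\<^sup>2 + 1 / (4 * h) * w"
    using step(2,3) h unfolding u_def v_def w_def
    by (auto dest!: enn2real_mono simp: enn2real_plus enn2real_mult less_top ennreal_mult_less_top)
  then have "2 * h * u \<le> 2 * h * v + 2 * h\<^sup>2 * L\<^sup>2 + w / 2"
    using h by (auto simp: field_simps power2_eq_square dest: mult_left_mono[of _ _ "2 * h"])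
  with step(4) show "enn2real ?W / 4 + h * real_of_ereal (Ffun F \<sigma>) \<le> h * f\<rho> + h\<^sup>2 * L\<^sup>2"
    unfolding w_def v_def by (simp add: algebra_simps)
  have "moment2 \<sigma> \<le> ennreal (1 + h) * moment2 \<rho> + ennreal (1 + 1 / h) * ?W"
    by (rule moment2_le_W2sq[OF \<rho> \<sigma> h])
  then show "enn2real (moment2 \<sigma>) \<le> (1 + h) * enn2real (moment2 \<rho>) + (1 + 1 / h) * enn2real ?W"
    using step(2) h P2acD(4)[OF \<rho>]
    by (auto dest!: enn2real_mono simp: enn2real_plus enn2real_mult less_top ennreal_mult_less_top
             simp del: ennreal_plus)
qed

lemma energy_telescope:
  fixes f w :: "nat \<Rightarrow> real"
  assumes step: "\<And>k. w k / 4 + h * f (Suc k) \<le> h * f k + c"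
  shows "(\<Sum>j<k. w j) / 4 + h * f k \<le> h * f 0 + real k * c"
proof (induction k)
  case (Suc k)
  then show ?case using step[of k] by (simp add: add_divide_distrib algebra_simps)
qed simp

lemma moment_iterate:
  fixes M w :: "nat \<Rightarrow> real"
  assumes h: "h \<ge> 0" and a: "a \<ge> 0" and w: "\<And>k. w k \<ge> 0"
    and step: "\<And>k. M (Suc k) \<le> (1 + h) * M k + a * w k"
  shows "M k \<le> (1 + h) ^ k * (M 0 + a * (\<Sum>j<k. w j))"
proof (induction k)
  case (Suc k)
  have "(1 + h) * M k \<le> (1 + h) * ((1 + h) ^ k * (M 0 + a * (\<Sum>j<k. w j)))"
    using Suc h by (intro mult_left_mono) auto
  moreover have "a * w k \<le> (1 + h) ^ Suc k * (a * w k)"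
    using mult_right_mono[OF one_le_power[of "1 + h" "Suc k"], of "a * w k"] h a w[of k] by simp
  ultimately have "M (Suc k) \<le> (1 + h) ^ Suc k * (M 0 + a * (\<Sum>j<k. w j)) + (1 + h) ^ Suc k * (a * w k)"
    using step[of k] by simp
  then show ?case by (simp add: algebra_simps)
qed simp

text \<open>\<open>\<delta>\<close> is chosen so that \<open>M\<close> reappears on the right with factor \<open>1/2\<close> and can be absorbed.\<close>

lemma moment_absorb:
  fixes h T E P M0 M S K \<delta> :: real
  assumes h: "h > 0" "h \<le> T" and E: "E \<ge> 1" "0 \<le> P" "P \<le> E"
    and \<delta>: "\<delta> = 1 / (8 * E * (T + 1))" and nonneg: "K \<ge> 0" "M \<ge> 0" "M0 \<ge> 0" "S \<ge> 0"
    and S: "S \<le> 4 * h * (K + \<delta> * M)"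
    and M: "M \<le> P * (M0 + (1 + 1 / h) * S)"
  shows "M \<le> 2 * (E * M0 + 4 * E * (T + 1) * K)"
proof -
  have "(1 + 1 / h) * S \<le> (1 + 1 / h) * (4 * h * (K + \<delta> * M))"
    using S h by (intro mult_left_mono) (auto simp: add_nonneg_nonneg)
  also have "\<dots> = 4 * (h + 1) * (K + \<delta> * M)" using h by (simp add: field_simps)
  also have "\<dots> \<le> 4 * (T + 1) * (K + \<delta> * M)" using h nonneg \<delta> E
    by (intro mult_right_mono) auto
  finally have S': "(1 + 1 / h) * S \<le> 4 * (T + 1) * (K + \<delta> * M)" .
  have "M \<le> E * (M0 + (1 + 1 / h) * S)"
    using M E nonneg h by (smt (verit) mult_right_mono zero_le_divide_1_iff add_nonneg_nonneg mult_nonneg_nonneg)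
  also have "\<dots> \<le> E * (M0 + 4 * (T + 1) * (K + \<delta> * M))" using S' E by simp
  also have "\<dots> = E * M0 + 4 * E * (T + 1) * K + (4 * E * (T + 1) * \<delta>) * M" by (simp add: algebra_simps)
  also have "4 * E * (T + 1) * \<delta> = 1 / 2" using \<delta> h E by simp
  finally show ?thesis by simp
qed

lemma one_plus_power_le_exp: "h \<ge> 0 \<Longrightarrow> (1 + h) ^ k \<le> exp (real k * h)"
  using power_mono[of "1 + h" "exp h" k] exp_ge_add_one_self[of h]
  by (simp add: exp_of_nat_mult add.commute)

lemma energy_bounds:
  fixes f w M :: "nat \<Rightarrow> real"
  assumes h: "h > 0" and kT: "real k * h \<le> T" and w_nonneg: "\<And>j. w j \<ge> 0"
    and energy: "\<And>j. w j / 4 + h * f (Suc j) \<le> h * f j + h\<^sup>2 * L\<^sup>2"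
    and lower: "f k \<ge> - \<delta> * M k - g"
  shows "f k \<le> f 0 + T * L\<^sup>2" "(\<Sum>j<k. w j) \<le> 4 * h * (f 0 + g + T * L\<^sup>2 + \<delta> * M k)"
proof -
  define S where "S = (\<Sum>j<k. w j)"
  have S_nonneg: "S \<ge> 0" unfolding S_def using w_nonneg by (simp add: sum_nonneg)
  have "real k * (h\<^sup>2 * L\<^sup>2) = h * ((real k * h) * L\<^sup>2)" by (simp add: power2_eq_square)
  also have "\<dots> \<le> h * (T * L\<^sup>2)" using h kT by (intro mult_left_mono mult_right_mono) auto
  finally have "S / 4 + h * f k \<le> h * (f 0 + T * L\<^sup>2)"
    using energy_telescope[of w h f "h\<^sup>2 * L\<^sup>2" k] energy unfolding S_def by (simp add: algebra_simps)
  then have "h * f k \<le> h * (f 0 + T * L\<^sup>2)" and S_energy: "S / 4 \<le> h * (f 0 + T * L\<^sup>2 - f k)"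
    using S_nonneg by (simp_all add: algebra_simps)
  then show "f k \<le> f 0 + T * L\<^sup>2" using h by simp
  have "f 0 + T * L\<^sup>2 - f k \<le> f 0 + g + T * L\<^sup>2 + \<delta> * M k"
    using lower by linarith
  then have "h * (f 0 + T * L\<^sup>2 - f k) \<le> h * (f 0 + g + T * L\<^sup>2 + \<delta> * M k)"
    using h by (intro mult_left_mono) auto
  then show "S \<le> 4 * h * (f 0 + g + T * L\<^sup>2 + \<delta> * M k)"
    using S_energy by simp
qed

lemma moment_bound:
  fixes M w :: "nat \<Rightarrow> real"
  assumes h: "h > 0" and kT: "real k * h \<le> T" and w_nonneg: "\<And>j. w j \<ge> 0"
    and M_nonneg: "M k \<ge> 0" "M 0 \<ge> 0"
    and moment: "\<And>j. M (Suc j) \<le> (1 + h) * M j + (1 + 1 / h) * w j"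
    and \<delta>: "\<delta> = 1 / (8 * exp T * (T + 1))" and K: "K \<ge> 0"
    and S: "(\<Sum>j<k. w j) \<le> 4 * h * (K + \<delta> * M k)"
  shows "M k \<le> 2 * (exp T * M 0 + 4 * exp T * (T + 1) * K)"
proof (cases "k = 0")
  case True
  then have "T \<ge> 0" using kT by simp
  then have "M 0 \<le> exp T * M 0" "0 \<le> 4 * exp T * (T + 1) * K"
    using K M_nonneg mult_right_mono[of 1 "exp T" "M 0"] by auto
  then show ?thesis using True M_nonneg by (smt (verit))
next
  case False
  then have "1 * h \<le> real k * h" using h by (intro mult_right_mono) auto
  then have hT: "h \<le> T" using kT by simp
  have "exp (real k * h) \<le> exp T" using kT by simp
  then have P: "(1 + h) ^ k \<le> exp T"
    using one_plus_power_le_exp[of h k] h by linarith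
  have "M k \<le> (1 + h) ^ k * (M 0 + (1 + 1 / h) * (\<Sum>j<k. w j))"
    using moment_iterate[of h "1 + 1 / h" w M] h w_nonneg moment by (simp add: add_nonneg_nonneg)
  moreover have "1 \<le> exp T" using h hT by simp
  ultimately show ?thesis
    using moment_absorb[OF h hT _ _ P \<delta> K M_nonneg _ S] h w_nonneg by (simp add: sum_nonneg)
qed

lemma discrete_energy_moment_bounds:
  fixes f w M :: "real \<Rightarrow> nat \<Rightarrow> real" and G :: "real \<Rightarrow> real"
  assumes f_init: "\<And>h. h > 0 \<Longrightarrow> f h 0 = f0" and M_init: "\<And>h. h > 0 \<Longrightarrow> M h 0 = M0"
    and L: "L \<ge> 0" and w_nonneg: "\<And>h k. w h k \<ge> 0" and M_nonneg: "\<And>h k. M h k \<ge> 0"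
    and G_nonneg: "\<And>\<delta>. G \<delta> \<ge> 0"
    and energy: "\<And>h k. h > 0 \<Longrightarrow> w h k / 4 + h * f h (Suc k) \<le> h * f h k + h\<^sup>2 * L\<^sup>2"
    and moment: "\<And>h k. h > 0 \<Longrightarrow> M h (Suc k) \<le> (1 + h) * M h k + (1 + 1 / h) * w h k"
    and lower: "\<And>h k \<delta>. h > 0 \<Longrightarrow> \<delta> > 0 \<Longrightarrow> f h k \<ge> - \<delta> * M h k - G \<delta>"
  shows "\<exists>C. \<forall>h>0. \<forall>k. real k * h \<le> T \<longrightarrow> M h k \<le> C \<and> f h k \<le> C \<and> (\<Sum>j<k. w h j) \<le> C * h"
proof (cases "T \<ge> 0")
  case False
  then show ?thesis by (intro exI[of _ 0]) (smt (verit) mult_nonneg_nonneg of_nat_0_le_iff)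
next
  case True
  define \<delta> where "\<delta> = 1 / (8 * exp T * (T + 1))"
  define K where "K = \<bar>f0\<bar> + G \<delta> + T * L\<^sup>2"
  define B where "B = 2 * (exp T * M0 + 4 * exp T * (T + 1) * K)"
  define C where "C = B + \<bar>f0\<bar> + T * L\<^sup>2 + 4 * (K + \<delta> * B)"
  have \<delta>: "\<delta> > 0" and K: "K \<ge> 0" and TL: "T * L\<^sup>2 \<ge> 0"
    using True G_nonneg by (auto simp: \<delta>_def K_def)
  have "M h k \<le> C \<and> f h k \<le> C \<and> (\<Sum>j<k. w h j) \<le> C * h"
    if h: "h > 0" and kT: "real k * h \<le> T" for h k
  proof -
    note energy = energy_bounds[where f = "f h" and w = "w h" and M = "M h",
        OF h kT w_nonneg energy[OF h] lower[OF h \<delta>], unfolded f_init[OF h]]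
    have "4 * h * (f0 + G \<delta> + T * L\<^sup>2 + \<delta> * M h k) \<le> 4 * h * (K + \<delta> * M h k)"
      using h unfolding K_def by (intro mult_left_mono) auto
    with energy(2) have S: "(\<Sum>j<k. w h j) \<le> 4 * h * (K + \<delta> * M h k)" by linarith
    have M: "M h k \<le> B" "0 \<le> B"
      using moment_bound[where M = "M h" and w = "w h", OF h kT w_nonneg M_nonneg M_nonneg moment[OF h] \<delta>_def K S]
        M_init[OF h]
        M_nonneg[of h k] unfolding B_def by auto
    have "4 * h * (K + \<delta> * M h k) \<le> 4 * h * (K + \<delta> * B)"
      using M h \<delta> by (simp add: mult_left_mono)
    moreover have "0 \<le> (B + \<bar>f0\<bar> + T * L\<^sup>2) * h"
      using h M TL by simp
    ultimately have "(\<Sum>j<k. w h j) \<le> C * h"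
      using S unfolding C_def by (simp add: algebra_simps)
    moreover have "0 \<le> \<delta> * B" using M \<delta> by simp
    then have "M h k \<le> C" "f h k \<le> C"
      using M energy(1) K TL abs_ge_self[of f0] abs_ge_zero[of f0] unfolding C_def by auto
    ultimately show ?thesis by simp
  qed
  then show ?thesis by blast
qed

lemma JKO_scheme_bounds:
  fixes \<rho> V :: "real \<Rightarrow> nat \<Rightarrow> 'a::euclidean_space \<Rightarrow> real"
  assumes F: "Hclass m F" and L: "L \<ge> 0"
    and P2: "\<And>h k. h > 0 \<Longrightarrow> \<rho> h k \<in> P2ac"
    and init: "\<And>h. h > 0 \<Longrightarrow> \<rho> h 0 = \<rho>0" and init_finite: "Ffun F \<rho>0 \<noteq> \<infinity>"
    and V_nonneg: "\<And>h k x. h > 0 \<Longrightarrow> V h k x \<ge> 0"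
    and V_meas: "\<And>h k. h > 0 \<Longrightarrow> V h k \<in> borel_measurable borel"
    and V_lip: "\<And>h k x y. h > 0 \<Longrightarrow> \<bar>V h k x - V h k y\<bar> \<le> L * dist x y"
    and minimal: "\<And>h k. h > 0 \<Longrightarrow>
      JKO h F (V h k) (\<rho> h k) (\<rho> h (Suc k)) \<le> JKO h F (V h k) (\<rho> h k) (\<rho> h k)"
  shows "\<exists>C. \<forall>h>0. \<forall>k. real k * h \<le> T \<longrightarrow> moment2 (\<rho> h k) \<le> ennreal C \<and> Ffun F (\<rho> h k) \<le> ereal C
           \<and> (\<Sum>j<nat \<lfloor>T / h\<rfloor>. W2sq (dmeas (\<rho> h j)) (dmeas (\<rho> h (j + 1)))) \<le> ennreal (C * h)"
proof -
  define f where "f h k = real_of_ereal (Ffun F (\<rho> h k))" for h k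
  define w where "w h k = enn2real (W2sq (dmeas (\<rho> h k)) (dmeas (\<rho> h (Suc k))))" for h k
  define M where "M h k = enn2real (moment2 (\<rho> h k))" for h k
  have step: "Ffun F (\<rho> h (Suc k)) \<noteq> \<infinity>" "W2sq (dmeas (\<rho> h k)) (dmeas (\<rho> h (Suc k))) \<noteq> \<top>"
    "w h k / 4 + h * f h (Suc k) \<le> h * f h k + h\<^sup>2 * L\<^sup>2"
    "M h (Suc k) \<le> (1 + h) * M h k + (1 + 1 / h) * w h k"
    if h: "h > 0" and "Ffun F (\<rho> h k) \<noteq> \<infinity>" for h k
    using JKO_step[OF P2[OF h] P2[OF h] h L V_nonneg[OF h] V_meas[OF h] V_lip[OF h] that(2) minimal[OF h]]
    unfolding f_def w_def M_def by simp_all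
  have finite: "Ffun F (\<rho> h k) \<noteq> \<infinity>" if "h > 0" for h k
    using that by (induction k) (auto simp: init init_finite step(1))
  have "\<exists>C. \<forall>h>0. \<forall>k. real k * h \<le> T \<longrightarrow> M h k \<le> C \<and> f h k \<le> C \<and> (\<Sum>j<k. w h j) \<le> C * h"
  proof (rule discrete_energy_moment_bounds[OF _ _ L])
    fix h \<delta> :: real and k :: nat assume h: "h > 0"
    show "f h 0 = real_of_ereal (Ffun F \<rho>0)" "M h 0 = enn2real (moment2 \<rho>0)"
      using init[OF h] unfolding f_def M_def by simp_all
    show "w h k / 4 + h * f h (Suc k) \<le> h * f h k + h\<^sup>2 * L\<^sup>2"
      "M h (Suc k) \<le> (1 + h) * M h k + (1 + 1 / h) * w h k"
      using step(3,4)[OF h finite[OF h]] by simp_all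
    assume "\<delta> > 0"
    with Ffun_ge_moment2[OF F P2[OF h]] finite[OF h] Ffun_not_MInfty[of F "\<rho> h k"]
    show "f h k \<ge> - \<delta> * M h k - enn2real (\<integral>\<^sup>+ x. ennreal (exp (- \<delta> * (norm (x::'a))\<^sup>2)) \<partial>lborel)"
      unfolding f_def M_def by (cases "Ffun F (\<rho> h k)") auto
  qed (simp_all add: w_def M_def)
  then obtain C where C: "\<And>h k. h > 0 \<Longrightarrow> real k * h \<le> T \<Longrightarrow> M h k \<le> C \<and> f h k \<le> C \<and> (\<Sum>j<k. w h j) \<le> C * h"
    by blast
  have "moment2 (\<rho> h k) \<le> ennreal C \<and> Ffun F (\<rho> h k) \<le> ereal C
      \<and> (\<Sum>j<nat \<lfloor>T / h\<rfloor>. W2sq (dmeas (\<rho> h j)) (dmeas (\<rho> h (j + 1)))) \<le> ennreal (C * h)"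
    if h: "h > 0" and kT: "real k * h \<le> T" for h k
  proof (intro conjI)
    have "moment2 (\<rho> h k) = ennreal (M h k)"
      using P2acD(4)[OF P2[OF h]] unfolding M_def by (simp add: less_top)
    then show "moment2 (\<rho> h k) \<le> ennreal C"
      using C[OF h kT] by (simp add: ennreal_leI)
    show "Ffun F (\<rho> h k) \<le> ereal C"
      using C[OF h kT] finite[OF h] Ffun_not_MInfty[of F "\<rho> h k"] unfolding f_def
      by (cases "Ffun F (\<rho> h k)") auto
    let ?N = "nat \<lfloor>T / h\<rfloor>"
    have "real ?N * h \<le> T"
      using h kT by (cases "T / h \<ge> 0") (auto simp: pos_le_divide_eq[symmetric])
    then have "(\<Sum>j<?N. w h j) \<le> C * h" using C[OF h] by blast
    moreover have "(\<Sum>j<?N. W2sq (dmeas (\<rho> h j)) (dmeas (\<rho> h (j + 1)))) = ennreal (\<Sum>j<?N. w h j)"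
      using step(2)[OF h finite[OF h]] unfolding w_def
      by (simp add: sum_ennreal[symmetric] less_top)
    ultimately show "(\<Sum>j<?N. W2sq (dmeas (\<rho> h j)) (dmeas (\<rho> h (j + 1)))) \<le> ennreal (C * h)"
      by (simp add: ennreal_leI)
  qed
  then show ?thesis by blast
qed

theorem mainTheorem4:
  fixes m :: "'l::finite \<Rightarrow> real"
    and F :: "'l \<Rightarrow> real \<Rightarrow> real"
    and V :: "'l \<Rightarrow> ('l \<Rightarrow> 'a::euclidean_space \<Rightarrow> real) \<Rightarrow> 'a \<Rightarrow> real"
    and gradV :: "'l \<Rightarrow> ('l \<Rightarrow> 'a \<Rightarrow> real) \<Rightarrow> 'a \<Rightarrow> 'a"
    and hessV :: "'l \<Rightarrow> ('l \<Rightarrow> 'a \<Rightarrow> real) \<Rightarrow> 'a \<Rightarrow> ('a \<Rightarrow>\<^sub>L 'a)"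
    and rho0 :: "'l \<Rightarrow> 'a \<Rightarrow> real"
    and rho :: "real \<Rightarrow> nat \<Rightarrow> 'l \<Rightarrow> 'a \<Rightarrow> real"
    and T :: real and i :: 'l
  assumes m_ge: "\<And>j. m j \<ge> 1"
    and F_class: "\<And>j. Hclass (m j) (F j)"
    and V_nonneg: "\<And>j \<mu> x. (\<forall>q. \<mu> q \<in> P2ac) \<Longrightarrow> V j \<mu> x \<ge> 0"
    and V_grad: "\<And>j \<mu> x. (\<forall>q. \<mu> q \<in> P2ac) \<Longrightarrow>
                   (V j \<mu> has_derivative (\<lambda>v. gradV j \<mu> x \<bullet> v)) (at x)"
    and V_hess: "\<And>j \<mu> x. (\<forall>q. \<mu> q \<in> P2ac) \<Longrightarrow>
                   (gradV j \<mu> has_derivative blinfun_apply (hessV j \<mu> x)) (at x)"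
    and V_C2: "\<And>j \<mu>. (\<forall>q. \<mu> q \<in> P2ac) \<Longrightarrow> continuous_on UNIV (hessV j \<mu>)"
    and V_cont: "\<And>j (\<mu>s :: nat \<Rightarrow> 'l \<Rightarrow> 'a \<Rightarrow> real) \<sigma> x.
                   (\<forall>s q. \<mu>s s q \<in> P2ac) \<Longrightarrow> (\<forall>q. \<sigma> q \<in> P2ac) \<Longrightarrow>
                   (\<forall>q. (\<lambda>s. W2 (dmeas (\<mu>s s q)) (dmeas (\<sigma> q))) \<longlonglongrightarrow> 0) \<Longrightarrow>
                   (\<lambda>s. V j (\<mu>s s) x) \<longlonglongrightarrow> V j \<sigma> x"
    and V_bounds: "\<exists>C. \<forall>j \<mu> \<nu> \<sigma> x. (\<forall>q. \<mu> q \<in> P2ac) \<longrightarrow> (\<forall>q. \<nu> q \<in> P2ac) \<longrightarrow>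
                     (\<forall>q. \<sigma> q \<in> P2ac) \<longrightarrow>
                     norm (gradV j \<mu> x) + norm (hessV j \<mu> x) \<le> C
                     \<and> norm (gradV j \<nu> x - gradV j \<sigma> x)
                         \<le> C * (\<Sum>q\<in>UNIV. W2 (dmeas (\<nu> q)) (dmeas (\<sigma> q)))"
    and init_P2: "\<And>j. rho0 j \<in> P2ac"
    and init_energy: "\<And>j. Ffun (F j) (rho0 j) + enn2ereal (Vfun (V j rho0) (rho0 j)) < \<infinity>"
    and scheme0: "\<And>h j. h > 0 \<Longrightarrow> rho h 0 j = rho0 j"
    and scheme_P2: "\<And>h k j. h > 0 \<Longrightarrow> k \<ge> 1 \<Longrightarrow> rho h k j \<in> P2ac"
    and scheme_min: "\<And>h k j \<sigma>. h > 0 \<Longrightarrow> k \<ge> 1 \<Longrightarrow> \<sigma> \<in> P2ac \<Longrightarrow>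
                       JKO h (F j) (V j (rho h (k - 1))) (rho h (k - 1) j) (rho h k j)
                         \<le> JKO h (F j) (V j (rho h (k - 1))) (rho h (k - 1) j) \<sigma>"
  shows "\<exists>C::real. \<forall>h>0. \<forall>k::nat. real k * h \<le> T \<longrightarrow>
            moment2 (rho h k i) \<le> ennreal C
          \<and> Ffun (F i) (rho h k i) \<le> ereal C
          \<and> (\<Sum>k'<nat \<lfloor>T / h\<rfloor>. W2sq (dmeas (rho h k' i)) (dmeas (rho h (k' + 1) i)))
               \<le> ennreal (C * h)"
proof -
  obtain C0 where C0: "\<And>j \<mu> x. \<forall>q. \<mu> q \<in> P2ac \<Longrightarrow> norm (gradV j \<mu> x) + norm (hessV j \<mu> x) \<le> C0"
    using V_bounds by blast
  define L where "L = max C0 0"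
  have P2: "\<forall>j. rho h k j \<in> P2ac" if "h > 0" for h k
    using that scheme0 init_P2 scheme_P2 by (cases k) auto
  have grad: "norm (gradV i (rho h k) x) \<le> L" if "h > 0" for h k x
  proof -
    have "norm (gradV i (rho h k) x) + norm (hessV i (rho h k) x) \<le> C0"
      using C0[OF P2[OF that]] .
    then show ?thesis unfolding L_def using norm_ge_zero[of "hessV i (rho h k) x"] by linarith
  qed
  show ?thesis
  proof (rule JKO_scheme_bounds[where \<rho> = "\<lambda>h k. rho h k i" and V = "\<lambda>h k. V i (rho h k)"])
    fix h :: real and k :: nat assume h: "h > 0"
    show "V i (rho h k) \<in> borel_measurable borel"
      by (rule borel_measurable_has_derivative[OF V_grad[OF P2[OF h]]])
    show "\<bar>V i (rho h k) x - V i (rho h k) y\<bar> \<le> L * dist x y" for x y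
      by (rule lipschitz_from_gradient_bound[OF V_grad[OF P2[OF h]] grad[OF h]])
    show "JKO h (F i) (V i (rho h k)) (rho h k i) (rho h (Suc k) i)
        \<le> JKO h (F i) (V i (rho h k)) (rho h k i) (rho h k i)"
      using scheme_min[OF h _ P2[OF h, rule_format], of "Suc k" i k i] by simp
  qed (use F_class init_energy V_nonneg P2 scheme0 in \<open>auto simp: L_def\<close>)
qed

end
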